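(* Let $\Lambda$ be a $\mathbb Z$-lattice of rank $\mu\ge1$ with a unimodular bilinear form $L$, let $M_h$ be the automorphism with $L(M_h(a),b)=-L(b,a)$ for all $a,b\in\Lambda$, and assume $M_h$ is of finite order. (a) For each eigenvalue $\lambda\ne1$ of $M_h$, the sesquilinear form $h_\lambda:\Lambda_\lambda\times\Lambda_\lambda\to\mathbb C$, $h_\lambda(a,b):=\sqrt{-\lambda}\cdot L(a,\bar b)$, is hermitian, i.e. $h_\lambda(b,a)=\overline{h_\lambda(a,b)}$; in particular $\sqrt{-\lambda}L(a,\bar a)\in\mathbb R$. Together these define a hermitian form $h:=\bigoplus_{\lambda\ne1}h_\lambda$. (b) For an $M_h$-invariant subspace $V\subset\Lambda_{\mathbb C}$ on which $1$ is not an eigenvalue of $M_h$, the following are equivalent: ($\alpha$) $h|_V$ is positive definite; ($\beta$) the hermitian form $(a,b)\mapsto L(a,\bar b)+L(\bar b,a)$ on $V$ is positive definite.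
   Context: $\Lambda_{\mathbb C}:=\Lambda\otimes\mathbb C$, $L$ extended bilinearly, complex conjugation with respect to $\Lambda$; $\Lambda_\lambda:=\ker(M_h-\lambda\,\mathrm{id})\subset\Lambda_{\mathbb C}$. The square root on $S^1-\{-1\}$ is $\sqrt{e^{2\pi i\alpha}}:=e^{\pi i\alpha}$ for $\alpha\in(-\tfrac12,\tfrac12)$. *)

theory Defs
  imports "HOL-Analysis.Analysis"
begin

text \<open>The lattice \<Lambda> is \<int>^n (n = CARD('n) = rank \<mu> \<ge> 1), embedded in
  \<Lambda>_C = complex^'n.  The bilinear form L is given by its Gram matrix A
  (integer entries), extended bilinearly to \<Lambda>_C.\<close>

definition int_vec :: "complex^'n \<Rightarrow> bool" where
  "int_vec v \<longleftrightarrow> (\<forall>i. v$i \<in> \<int>)"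

definition int_mat :: "complex^'n^'m \<Rightarrow> bool" where
  "int_mat A \<longleftrightarrow> (\<forall>i j. A$i$j \<in> \<int>)"

definition Lform :: "complex^'n^'n \<Rightarrow> complex^'n \<Rightarrow> complex^'n \<Rightarrow> complex" where
  "Lform A a b = (\<Sum>i\<in>UNIV. \<Sum>j\<in>UNIV. a$i * A$i$j * b$j)"

definition vcnj :: "complex^'n \<Rightarrow> complex^'n" where
  "vcnj v = (\<chi> i. cnj (v$i))"

definition eigsp :: "complex^'n^'n \<Rightarrow> complex \<Rightarrow> (complex^'n) set" where
  "eigsp M lam = {v. M *v v = lam *s v}"

definition is_eigval :: "complex^'n^'n \<Rightarrow> complex \<Rightarrow> bool" where
  "is_eigval M lam \<longleftrightarrow> (\<exists>v. v \<noteq> 0 \<and> M *v v = lam *s v)"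

definition sqrtS1 :: "complex \<Rightarrow> complex" where
  "sqrtS1 z = (THE w. \<exists>\<alpha>::real. -1/2 < \<alpha> \<and> \<alpha> < 1/2 \<and>
       z = exp (2 * pi * \<i> * of_real \<alpha>) \<and> w = exp (pi * \<i> * of_real \<alpha>))"

definition hlam :: "complex^'n^'n \<Rightarrow> complex \<Rightarrow> complex^'n \<Rightarrow> complex^'n \<Rightarrow> complex" where
  "hlam A lam a b = sqrtS1 (- lam) * Lform A a (vcnj b)"

definition eigcomp :: "complex^'n^'n \<Rightarrow> complex \<Rightarrow> complex^'n \<Rightarrow> complex^'n" where
  "eigcomp M lam a = (THE f. (\<forall>\<mu>. is_eigval M \<mu> \<longrightarrow> f \<mu> \<in> eigsp M \<mu>) \<and>
        (\<forall>\<mu>. \<not> is_eigval M \<mu> \<longrightarrow> f \<mu> = 0) \<and>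
        a = (\<Sum>\<mu>\<in>{\<mu>. is_eigval M \<mu>}. f \<mu>)) lam"

definition hform :: "complex^'n^'n \<Rightarrow> complex^'n^'n \<Rightarrow> complex^'n \<Rightarrow> complex^'n \<Rightarrow> complex" where
  "hform A M a b = (\<Sum>lam\<in>{l. is_eigval M l \<and> l \<noteq> 1}.
        hlam A lam (eigcomp M lam a) (eigcomp M lam b))"

definition csubspace :: "(complex^'n) set \<Rightarrow> bool" where
  "csubspace V \<longleftrightarrow> 0 \<in> V \<and> (\<forall>x\<in>V. \<forall>y\<in>V. x + y \<in> V) \<and> (\<forall>c. \<forall>x\<in>V. c *s x \<in> V)"

definition pos_def_on :: "(complex^'n) set \<Rightarrow> (complex^'n \<Rightarrow> complex^'n \<Rightarrow> complex) \<Rightarrow> bool" where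
  "pos_def_on V f \<longleftrightarrow> (\<forall>v\<in>V. v \<noteq> 0 \<longrightarrow> Im (f v v) = 0 \<and> Re (f v v) > 0)"

end

theory Submission
  imports Defs
begin

text \<open>The skew relation L(M a, b) = -L(b, a) extends bilinearly from \<Lambda> to \<Lambda>_C and
  gives L(M a, M b) = L(a, b).  Hence for eigenvectors a \<in> \<Lambda>_\<lambda>, b \<in> \<Lambda>_\<mu> one gets
  L(a, conj b) = \<lambda> conj \<mu> L(a, conj b), so distinct eigenspaces are L(_, conj _)-orthogonal,
  and L(conj b, a) = -\<lambda> L(a, conj b).  Writing -\<lambda> = s^2 with s = sqrt(-\<lambda>) of modulus 1, the
  latter is exactly hermitian symmetry of h_\<lambda>.  For v = \<Sum> v_\<lambda> the two quadratic forms become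
  diagonal: h(v, v) = \<Sum>_{\<lambda>\<noteq>1} h_\<lambda>(v_\<lambda>, v_\<lambda>) and
  L(v, conj v) + L(conj v, v) = \<Sum>_\<lambda> (1 - \<lambda>) L(v_\<lambda>, conj v_\<lambda>) = \<Sum>_{\<lambda>\<noteq>1} 2 Re(s) h_\<lambda>(v_\<lambda>, v_\<lambda>),
  with weights 2 Re(s) > 0.  An M-invariant V contains the eigencomponents of its vectors
  (they are polynomials in M applied to the vector), and none of them has \<lambda> = 1, so both forms
  are positive definite on V iff every h_\<lambda> is positive definite on V \<inter> \<Lambda>_\<lambda>.\<close>

lemma Lform_add_left: "Lform A (a + b) c = Lform A a c + Lform A b c"
  by (simp add: Lform_def distrib_right sum.distrib)

lemma Lform_add_right: "Lform A a (b + c) = Lform A a b + Lform A a c"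
  by (simp add: Lform_def distrib_left sum.distrib)

lemma Lform_smult_left: "Lform A (s *s a) c = s * Lform A a c"
  by (simp add: Lform_def sum_distrib_left mult.assoc)

lemma Lform_smult_right: "Lform A a (s *s c) = s * Lform A a c"
  by (simp add: Lform_def sum_distrib_left mult_ac)

lemma Lform_zero_left [simp]: "Lform A 0 c = 0"
  by (simp add: Lform_def)

lemma Lform_zero_right [simp]: "Lform A a 0 = 0"
  by (simp add: Lform_def)

lemma Lform_sum_left: "finite S \<Longrightarrow> Lform A (sum f S) c = (\<Sum>i\<in>S. Lform A (f i) c)"
  by (induction S rule: finite_induct) (auto simp: Lform_add_left)

lemma Lform_sum_right: "finite S \<Longrightarrow> Lform A c (sum f S) = (\<Sum>i\<in>S. Lform A c (f i))"
  by (induction S rule: finite_induct) (auto simp: Lform_add_right)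

lemma vcnj_add: "vcnj (a + b) = vcnj a + vcnj b"
  by (simp add: vcnj_def vec_eq_iff)

lemma vcnj_smult: "vcnj (c *s a) = cnj c *s vcnj a"
  by (simp add: vcnj_def vec_eq_iff)

lemma vcnj_zero [simp]: "vcnj 0 = 0"
  by (simp add: vcnj_def vec_eq_iff)

lemma vcnj_vcnj [simp]: "vcnj (vcnj a) = a"
  by (simp add: vcnj_def vec_eq_iff)

lemma vcnj_sum: "finite S \<Longrightarrow> vcnj (sum f S) = (\<Sum>i\<in>S. vcnj (f i))"
  by (induction S rule: finite_induct) (auto simp: vcnj_add vcnj_def vec_eq_iff)

lemma vcnj_matrix_vector_mult:
  "(\<forall>i j. M$i$j \<in> \<real>) \<Longrightarrow> vcnj (M *v v) = M *v vcnj v"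
  by (simp add: vcnj_def vec_eq_iff matrix_vector_mult_def Reals_cnj_iff)

lemma cnj_Lform: "(\<forall>i j. A$i$j \<in> \<real>) \<Longrightarrow> cnj (Lform A a b) = Lform A (vcnj a) (vcnj b)"
  by (simp add: Lform_def vcnj_def Reals_cnj_iff)

lemma hlam_zero_right [simp]: "hlam A l a 0 = 0"
  by (simp add: hlam_def)

lemma int_mat_real: "int_mat A \<Longrightarrow> \<forall>i j. A$i$j \<in> \<real>"
  unfolding int_mat_def by (metis Ints_cases Reals_of_int)

lemma Lform_skew_extends:
  fixes A M :: "complex^'n^'n"
  assumes skew: "\<forall>a b. int_vec a \<longrightarrow> int_vec b \<longrightarrow> Lform A (M *v a) b = - Lform A b a"
  shows "Lform A (M *v a) b = - Lform A b a"
proof -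
  have int_axis: "int_vec (axis i (1::complex))" for i
    by (simp add: int_vec_def axis_def)
  let ?e = "\<lambda>i. axis i (1::complex)"
  have "Lform A (M *v (\<Sum>i\<in>UNIV. a$i *s ?e i)) (\<Sum>j\<in>UNIV. b$j *s ?e j)
      = (\<Sum>j\<in>UNIV. \<Sum>i\<in>UNIV. b$j * (a$i * Lform A (M *v ?e i) (?e j)))"
    by (simp add: vec.sum vector_scalar_commute Lform_sum_left
        Lform_sum_right Lform_smult_left Lform_smult_right sum_distrib_left)
  also have "\<dots> = - (\<Sum>j\<in>UNIV. \<Sum>i\<in>UNIV. b$j * (a$i * Lform A (?e j) (?e i)))"
    by (simp add: skew int_axis sum_negf)
  also have "(\<Sum>j\<in>UNIV. \<Sum>i\<in>UNIV. b$j * (a$i * Lform A (?e j) (?e i)))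
      = Lform A (\<Sum>j\<in>UNIV. b$j *s ?e j) (\<Sum>i\<in>UNIV. a$i *s ?e i)"
    by (simp add: Lform_sum_left Lform_sum_right Lform_smult_left Lform_smult_right
        sum_distrib_left) (subst sum.swap, simp add: mult_ac)
  finally show ?thesis
    by (simp only: basis_expansion)
qed

lemma csubspace_sum:
  assumes "csubspace V" "finite S" "\<forall>i\<in>S. f i \<in> V"
  shows "sum f S \<in> V"
  using assms(2,3) by (induction S rule: finite_induct) (use assms(1) in \<open>auto simp: csubspace_def\<close>)

lemma root_unity_cnj_mult:
  assumes "n > 0" "(z::complex) ^ n = 1"
  shows "cnj z * z = 1"
proof -
  have "norm z = 1" using assms power_eq_1_iff by blast
  then show ?thesis by (metis complex_norm_square mult.commute of_real_1 power_one)
qed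

lemma sum_roots_unity_power:
  assumes "0 < j" "j < n"
  shows "(\<Sum>z\<in>{z::complex. z ^ n = 1}. z ^ j) = 0"
proof -
  define f where "f m = cis (2 * pi * real m / real n)" for m
  have bij: "bij_betw f {..<n} {z. z ^ n = 1}"
    unfolding f_def using Complex.bij_betw_roots_unity assms by simp
  have "(\<Sum>z\<in>{z::complex. z ^ n = 1}. z ^ j) = (\<Sum>m<n. f m ^ j)"
    using bij by (intro sum.reindex_bij_betw[symmetric])
  also have "\<dots> = (\<Sum>m<n. f j ^ m)"
    by (intro sum.cong refl) (simp only: f_def Complex.DeMoivre, simp add: field_simps)
  also have "\<dots> = 0"
  proof -
    have "f j ^ n = 1" using bij assms unfolding bij_betw_def by auto
    moreover have "f j \<noteq> f 0" using bij assms unfolding bij_betw_def inj_on_def by fastforce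
    ultimately show ?thesis by (simp add: geometric_sum f_def)
  qed
  finally show ?thesis .
qed

locale finite_order =
  fixes M :: "complex^'n^'n" and k :: nat
  assumes order_pos: "k > 0" and funpow_order: "((*v) M ^^ k) = id"
begin

abbreviation Mpow :: "nat \<Rightarrow> complex^'n \<Rightarrow> complex^'n" where
  "Mpow j \<equiv> ((*v) M ^^ j)"

abbreviation eigvals :: "complex set" where
  "eigvals \<equiv> {l. is_eigval M l}"

abbreviation nontriv_eigvals :: "complex set" where
  "nontriv_eigvals \<equiv> {l. is_eigval M l \<and> l \<noteq> 1}"

text \<open>The averaging projector (1/k) \<Sum>_{j<k} l^(-j) M^j onto \<Lambda>_l, written with
  cnj l = l^(-1) for a k-th root of unity l.\<close>
definition eigproj :: "complex \<Rightarrow> complex^'n \<Rightarrow> complex^'n" where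
  "eigproj l v = (\<Sum>j<k. (cnj l ^ j / of_nat k) *s Mpow j v)"

lemma Mpow_add: "Mpow j (a + b) = Mpow j a + Mpow j b"
  by (induction j) (auto simp: matrix_vector_right_distrib)

lemma Mpow_zero [simp]: "Mpow j 0 = 0"
  by (induction j) auto

lemma Mpow_eigsp: "x \<in> eigsp M l \<Longrightarrow> Mpow j x = l ^ j *s x"
  by (induction j) (auto simp: eigsp_def vector_scalar_commute vector_smult_assoc mult_ac)

lemma eigval_root_unity: "is_eigval M l \<Longrightarrow> l ^ k = 1"
proof -
  assume "is_eigval M l"
  then obtain v where v: "v \<noteq> 0" "v \<in> eigsp M l" unfolding is_eigval_def eigsp_def by blast
  have "1 *s v = l ^ k *s v"
    using Mpow_eigsp[OF v(2), of k] funpow_order by simp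
  with v show ?thesis by (metis vector_mul_rcancel)
qed

lemma finite_eigvals: "finite eigvals"
  using order_pos eigval_root_unity
  by (intro finite_subset[OF _ finite_roots_unity[of k]]) auto

lemma eigproj_add: "eigproj l (a + b) = eigproj l a + eigproj l b"
  by (simp add: eigproj_def Mpow_add vector_add_ldistrib sum.distrib)

lemma eigproj_sum: "finite S \<Longrightarrow> eigproj l (sum f S) = (\<Sum>i\<in>S. eigproj l (f i))"
  by (induction S rule: finite_induct) (auto simp: eigproj_add, simp add: eigproj_def)

lemma eigproj_eigsp:
  assumes "l ^ k = 1"
  shows "eigproj l v \<in> eigsp M l"
proof -
  have cl: "l * cnj l = 1" using root_unity_cnj_mult[OF order_pos assms] by (simp add: mult.commute)
  define g where "g j = (cnj l ^ j / of_nat k) *s Mpow j v" for j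
  have "M *v eigproj l v = (\<Sum>j<k. (cnj l ^ j / of_nat k) *s Mpow (Suc j) v)"
    by (simp add: eigproj_def vec.sum vector_scalar_commute)
  also have "\<dots> = (\<Sum>j<k. l *s g (Suc j))"
    by (intro sum.cong refl) (simp add: g_def vector_smult_assoc cl mult.assoc[symmetric])
  also have "\<dots> = l *s (\<Sum>j<k. g (Suc j))"
    by (simp add: vec_eq_iff sum_distrib_left)
  also have "(\<Sum>j<k. g (Suc j)) = (\<Sum>j<k. g j)"
  proof -
    have "g k = g 0" using assms funpow_order by (simp add: g_def flip: complex_cnj_power)
    then show ?thesis
      using sum.lessThan_Suc_shift[of g k] sum.lessThan_Suc[of g k] by (simp add: add.commute)
  qed
  finally show ?thesis by (simp add: g_def eigproj_def eigsp_def)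
qed

lemma eigproj_eigvec:
  assumes "l ^ k = 1" "m ^ k = 1" "x \<in> eigsp M m"
  shows "eigproj l x = (if l = m then x else 0)"
proof -
  have "eigproj l x = ((\<Sum>j<k. (cnj l * m) ^ j) / of_nat k) *s x"
    by (simp add: eigproj_def Mpow_eigsp[OF assms(3)] vector_smult_assoc power_mult_distrib
        vec_eq_iff sum_distrib_right sum_divide_distrib)
  moreover have "(cnj l * m) ^ k = 1"
    using assms by (simp add: power_mult_distrib flip: complex_cnj_power)
  moreover have "cnj l * m = 1 \<longleftrightarrow> l = m"
    using root_unity_cnj_mult[OF order_pos assms(1)] root_unity_cnj_mult[OF order_pos assms(2)]
    by (metis complex_cnj_cnj complex_cnj_mult complex_cnj_one mult.left_neutral mult.assoc)
  ultimately show ?thesis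
    using root_unity_cnj_mult[OF order_pos assms(1)] order_pos by (auto simp: geometric_sum)
qed

lemma sum_eigproj_roots_unity: "(\<Sum>l\<in>{z::complex. z ^ k = 1}. eigproj l v) = v"
proof -
  let ?R = "{z::complex. z ^ k = 1}"
  have "(\<Sum>l\<in>?R. eigproj l v) = (\<Sum>j<k. ((\<Sum>l\<in>?R. cnj l ^ j) / of_nat k) *s Mpow j v)"
    unfolding eigproj_def
    by (subst sum.swap) (simp add: vec_eq_iff sum_distrib_right sum_divide_distrib)
  also have "\<dots> = (\<Sum>j<k. (if j = 0 then 1 else 0) *s Mpow j v)"
  proof (intro sum.cong refl)
    fix j assume j: "j \<in> {..<k}"
    have "(\<Sum>l\<in>?R. cnj l ^ j) = cnj (\<Sum>l\<in>?R. l ^ j)"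
      by (simp flip: complex_cnj_power)
    also have "\<dots> = (if j = 0 then of_nat k else 0)"
      using j order_pos sum_roots_unity_power[of j k] by (simp add: card_roots_unity_eq del: cnj_sum)
    finally show "((\<Sum>l\<in>?R. cnj l ^ j) / of_nat k) *s Mpow j v = (if j = 0 then 1 else 0) *s Mpow j v"
      using order_pos by simp
  qed
  also have "\<dots> = v"
    using order_pos by (simp add: if_distrib[where f="\<lambda>c. c *s _"] sum.delta' cong: if_cong)
  finally show ?thesis .
qed

lemma sum_eigproj_eigvals: "(\<Sum>l\<in>eigvals. eigproj l v) = v"
proof -
  have "eigproj l v = 0" if "l ^ k = 1" "\<not> is_eigval M l" for l
    using eigproj_eigsp[OF that(1)] that(2) unfolding is_eigval_def eigsp_def by blast
  then have "(\<Sum>l\<in>eigvals. eigproj l v) = (\<Sum>l\<in>{z::complex. z ^ k = 1}. eigproj l v)"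
    using eigval_root_unity order_pos
    by (intro sum.mono_neutral_left finite_roots_unity) auto
  also have "\<dots> = v" by (rule sum_eigproj_roots_unity)
  finally show ?thesis .
qed

lemma eigcomp_eq_eigproj: "eigcomp M l v = (if is_eigval M l then eigproj l v else 0)"
proof -
  define f where "f = (\<lambda>m. if is_eigval M m then eigproj m v else 0)"
  have "(THE f. (\<forall>\<mu>. is_eigval M \<mu> \<longrightarrow> f \<mu> \<in> eigsp M \<mu>) \<and>
        (\<forall>\<mu>. \<not> is_eigval M \<mu> \<longrightarrow> f \<mu> = 0) \<and> v = (\<Sum>\<mu>\<in>eigvals. f \<mu>)) = f"
  proof (rule the_equality)
    show "(\<forall>\<mu>. is_eigval M \<mu> \<longrightarrow> f \<mu> \<in> eigsp M \<mu>) \<and>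
        (\<forall>\<mu>. \<not> is_eigval M \<mu> \<longrightarrow> f \<mu> = 0) \<and> v = (\<Sum>\<mu>\<in>eigvals. f \<mu>)"
      using sum_eigproj_eigvals[of v] by (auto simp: f_def eigproj_eigsp eigval_root_unity)
  next
    fix g assume g: "(\<forall>\<mu>. is_eigval M \<mu> \<longrightarrow> g \<mu> \<in> eigsp M \<mu>) \<and>
        (\<forall>\<mu>. \<not> is_eigval M \<mu> \<longrightarrow> g \<mu> = 0) \<and> v = (\<Sum>\<mu>\<in>eigvals. g \<mu>)"
    have "g l = f l" if l: "is_eigval M l" for l
    proof -
      have "eigproj l v = (\<Sum>m\<in>eigvals. eigproj l (g m))"
        using g finite_eigvals by (metis eigproj_sum)
      also have "\<dots> = (\<Sum>m\<in>eigvals. if l = m then g m else 0)"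
        using g l eigval_root_unity eigproj_eigvec by (intro sum.cong refl) auto
      also have "\<dots> = g l" using l finite_eigvals by (simp add: sum.delta)
      finally show ?thesis using l by (simp add: f_def)
    qed
    then show "g = f" using g by (auto simp: f_def)
  qed
  then show ?thesis unfolding eigcomp_def f_def by simp
qed

lemma eigproj_invariant_subspace:
  assumes "csubspace V" "\<forall>v\<in>V. M *v v \<in> V" "v \<in> V"
  shows "eigproj l v \<in> V"
proof -
  have "Mpow j v \<in> V" for j
    using assms(2,3) by (induction j) auto
  then show ?thesis
    unfolding eigproj_def using assms(1) by (intro csubspace_sum) (auto simp: csubspace_def)
qed

lemma exists_nontrivial_eigproj:
  assumes "csubspace V" "\<forall>v\<in>V. M *v v \<in> V" "\<forall>v\<in>V. M *v v = v \<longrightarrow> v = 0"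
    and "v \<in> V" "v \<noteq> 0"
  shows "\<exists>l\<in>nontriv_eigvals. eigproj l v \<noteq> 0"
proof (rule ccontr)
  assume "\<not> ?thesis"
  moreover have "eigproj 1 v = 0"
    using assms eigproj_invariant_subspace eigproj_eigsp[of 1 v] by (simp add: eigsp_def)
  ultimately have "(\<Sum>l\<in>eigvals. eigproj l v) = 0"
    by (intro sum.neutral) blast
  with assms(5) show False by (simp add: sum_eigproj_eigvals)
qed

end

lemma exp_half_angle:
  assumes "-1/2 < \<alpha>" "\<alpha> < 1/2"
  defines "w \<equiv> exp (pi * \<i> * of_real \<alpha>)"
  shows "w ^ 2 = exp (2 * pi * \<i> * of_real \<alpha>)" "Re w > 0" "cnj w * w = 1"
proof -
  have w: "w = cis (pi * \<alpha>)" by (simp add: w_def cis_conv_exp mult_ac)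
  have "w ^ 2 = cis (2 * (pi * \<alpha>))" unfolding w using Complex.DeMoivre[of "pi * \<alpha>" 2] by simp
  then show "w ^ 2 = exp (2 * pi * \<i> * of_real \<alpha>)" by (simp add: cis_conv_exp mult_ac)
  have "pi * (-1/2) < pi * \<alpha>" "pi * \<alpha> < pi * (1/2)"
    using assms(1,2) by (simp_all only: mult_strict_left_mono pi_gt_zero)
  then show "Re w > 0" unfolding w by (simp add: cos_gt_zero_pi)
  show "cnj w * w = 1"
    unfolding w using Complex.cis_mult[of "- (pi * \<alpha>)" "pi * \<alpha>"] by (simp add: cis_cnj)
qed

lemma sqrtS1_unit_circle:
  assumes "norm z = 1" "z \<noteq> -1"
  shows "sqrtS1 z ^ 2 = z" "Re (sqrtS1 z) > 0" "cnj (sqrtS1 z) * sqrtS1 z = 1"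
proof -
  define \<alpha> where "\<alpha> = Arg z / (2 * pi)"
  have "z = cis (Arg z)"
    using assms(1) cis_Arg[of z] by (metis Complex.sgn_eq div_by_1 norm_zero of_real_1 zero_neq_one)
  moreover have "Arg z \<noteq> pi" using assms(2) calculation by auto
  ultimately have z: "z = exp (2 * pi * \<i> * of_real \<alpha>)" and \<alpha>: "-1/2 < \<alpha>" "\<alpha> < 1/2"
    using Arg_bounded[of z] by (auto simp: \<alpha>_def cis_conv_exp field_simps)
  let ?w = "exp (pi * \<i> * of_real \<alpha>)"
  have "w = ?w" if "\<exists>\<beta>::real. -1/2 < \<beta> \<and> \<beta> < 1/2 \<and>
      z = exp (2 * pi * \<i> * of_real \<beta>) \<and> w = exp (pi * \<i> * of_real \<beta>)" for w
  proof -
    have w: "w ^ 2 = z" "Re w > 0" using that exp_half_angle by blast+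
    have "(w - ?w) * (w + ?w) = 0"
      using w exp_half_angle(1)[OF \<alpha>] z by (simp add: algebra_simps power2_eq_square)
    moreover have "w + ?w \<noteq> 0"
      using w exp_half_angle(2)[OF \<alpha>]
      by (metis add_pos_pos less_irrefl plus_complex.sel(1) zero_complex.sel(1))
    ultimately show ?thesis by simp
  qed
  then have "sqrtS1 z = ?w"
    unfolding sqrtS1_def using z \<alpha> by (intro the_equality) blast+
  then show "sqrtS1 z ^ 2 = z" "Re (sqrtS1 z) > 0" "cnj (sqrtS1 z) * sqrtS1 z = 1"
    using exp_half_angle[OF \<alpha>] z by simp_all
qed

locale skew_finite_order = finite_order M k for M :: "complex^'n^'n" and k +
  fixes A :: "complex^'n^'n"
  assumes A_real: "\<forall>i j. A$i$j \<in> \<real>"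
    and M_real: "\<forall>i j. M$i$j \<in> \<real>"
    and Lform_skew: "\<And>a b. Lform A (M *v a) b = - Lform A b a"
begin

lemma Lform_M_invariant: "Lform A (M *v x) (M *v y) = Lform A x y"
  using Lform_skew by simp

lemma vcnj_eigsp: "x \<in> eigsp M l \<Longrightarrow> vcnj x \<in> eigsp M (cnj l)"
  by (simp add: eigsp_def vcnj_matrix_vector_mult[OF M_real, symmetric] vcnj_smult)

lemma Lform_swap_eigvec: "x \<in> eigsp M l \<Longrightarrow> Lform A y x = - l * Lform A x y"
  using Lform_skew[of x y] by (simp add: eigsp_def Lform_smult_left)

lemma Lform_eigsp_orthogonal:
  assumes "l ^ k = 1" "m ^ k = 1" "l \<noteq> m" "x \<in> eigsp M l" "y \<in> eigsp M m"
  shows "Lform A x (vcnj y) = 0"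
proof -
  have "Lform A x (vcnj y) = Lform A (M *v x) (M *v vcnj y)"
    by (simp add: Lform_M_invariant)
  also have "\<dots> = (l * cnj m) * Lform A x (vcnj y)"
    using assms(4) vcnj_eigsp[OF assms(5)] by (simp add: eigsp_def Lform_smult_left Lform_smult_right)
  finally have "(1 - l * cnj m) * Lform A x (vcnj y) = 0"
    by (simp add: algebra_simps)
  moreover have "l * cnj m \<noteq> 1"
    using assms(3) root_unity_cnj_mult[OF order_pos assms(2)]
    by (metis mult.assoc mult.commute mult.right_neutral)
  ultimately show ?thesis by simp
qed

lemma Lform_eigvec_vcnj_eigproj:
  assumes "is_eigval M l" "x \<in> eigsp M l"
  shows "Lform A x (vcnj v) = Lform A x (vcnj (eigproj l v))"
proof -
  have "Lform A x (vcnj v) = (\<Sum>m\<in>eigvals. Lform A x (vcnj (eigproj m v)))"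
    by (subst (1) sum_eigproj_eigvals[of v, symmetric])
      (simp add: vcnj_sum Lform_sum_right finite_eigvals)
  also have "\<dots> = (\<Sum>m\<in>eigvals. if m = l then Lform A x (vcnj (eigproj l v)) else 0)"
  proof (intro sum.cong refl)
    fix m assume "m \<in> eigvals"
    then show "Lform A x (vcnj (eigproj m v)) = (if m = l then Lform A x (vcnj (eigproj l v)) else 0)"
      using assms eigval_root_unity eigproj_eigsp[of m v]
      by (auto intro!: Lform_eigsp_orthogonal[of l m])
  qed
  also have "\<dots> = Lform A x (vcnj (eigproj l v))"
    using assms(1) finite_eigvals by (simp add: sum.delta')
  finally show ?thesis .
qed

lemma sqrtS1_neg_eigval:
  assumes "l \<in> nontriv_eigvals"
  shows "sqrtS1 (- l) ^ 2 = - l" "Re (sqrtS1 (- l)) > 0" "cnj (sqrtS1 (- l)) * sqrtS1 (- l) = 1"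
proof -
  have "norm l = 1"
    using assms eigval_root_unity order_pos power_eq_1_iff by blast
  then show "sqrtS1 (- l) ^ 2 = - l" "Re (sqrtS1 (- l)) > 0" "cnj (sqrtS1 (- l)) * sqrtS1 (- l) = 1"
    using sqrtS1_unit_circle[of "- l"] assms by auto
qed

lemma hlam_hermitian:
  assumes "l \<in> nontriv_eigvals" "a \<in> eigsp M l" "b \<in> eigsp M l"
  shows "hlam A l b a = cnj (hlam A l a b)"
proof -
  define s where "s = sqrtS1 (- l)"
  have "cnj (hlam A l a b) = cnj s * Lform A (vcnj a) b"
    by (simp add: hlam_def s_def cnj_Lform[OF A_real])
  also have "\<dots> = cnj s * (s ^ 2 * Lform A b (vcnj a))"
    using Lform_swap_eigvec[OF assms(3)] sqrtS1_neg_eigval(1)[OF assms(1)] by (simp add: s_def)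
  also have "\<dots> = (cnj s * s) * s * Lform A b (vcnj a)"
    by (simp add: power2_eq_square mult_ac)
  also have "\<dots> = hlam A l b a"
    using sqrtS1_neg_eigval(3)[OF assms(1)] by (simp add: hlam_def s_def)
  finally show ?thesis by simp
qed

lemma hlam_diag_real: "l \<in> nontriv_eigvals \<Longrightarrow> x \<in> eigsp M l \<Longrightarrow> hlam A l x x \<in> \<real>"
  using hlam_hermitian[of l x x] by (simp add: Reals_cnj_iff)

lemma hform_diagonal:
  "hform A M v v = (\<Sum>l\<in>nontriv_eigvals. hlam A l (eigproj l v) (eigproj l v))"
  unfolding hform_def by (intro sum.cong refl) (simp add: eigcomp_eq_eigproj)

lemma eigproj_in_eigsp: "l \<in> eigvals \<Longrightarrow> eigproj l v \<in> eigsp M l"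
  using eigproj_eigsp eigval_root_unity by auto

lemma Lform_vcnj_diagonal:
  "Lform A v (vcnj v) = (\<Sum>l\<in>eigvals. Lform A (eigproj l v) (vcnj (eigproj l v)))"
proof -
  have "Lform A v (vcnj v) = (\<Sum>l\<in>eigvals. Lform A (eigproj l v) (vcnj v))"
    by (subst (1) sum_eigproj_eigvals[of v, symmetric]) (simp add: Lform_sum_left finite_eigvals)
  also have "\<dots> = (\<Sum>l\<in>eigvals. Lform A (eigproj l v) (vcnj (eigproj l v)))"
  proof (intro sum.cong refl)
    fix l assume l: "l \<in> eigvals"
    show "Lform A (eigproj l v) (vcnj v) = Lform A (eigproj l v) (vcnj (eigproj l v))"
      using Lform_eigvec_vcnj_eigproj[of l "eigproj l v" v] eigproj_in_eigsp[OF l] l by simp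
  qed
  finally show ?thesis .
qed

lemma Lform_vcnj_swapped_diagonal:
  "Lform A (vcnj v) v = (\<Sum>l\<in>eigvals. - l * Lform A (eigproj l v) (vcnj (eigproj l v)))"
proof -
  have "Lform A (vcnj v) v = (\<Sum>l\<in>eigvals. Lform A (vcnj v) (eigproj l v))"
    by (subst (2) sum_eigproj_eigvals[of v, symmetric]) (simp add: Lform_sum_right finite_eigvals)
  also have "\<dots> = (\<Sum>l\<in>eigvals. - l * Lform A (eigproj l v) (vcnj (eigproj l v)))"
  proof (intro sum.cong refl)
    fix l assume l: "l \<in> eigvals"
    have "Lform A (vcnj v) (eigproj l v) = - l * Lform A (eigproj l v) (vcnj v)"
      by (rule Lform_swap_eigvec[OF eigproj_in_eigsp[OF l]])
    also have "\<dots> = - l * Lform A (eigproj l v) (vcnj (eigproj l v))"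
      using Lform_eigvec_vcnj_eigproj[of l "eigproj l v" v] eigproj_in_eigsp[OF l] l by simp
    finally show "Lform A (vcnj v) (eigproj l v) = - l * Lform A (eigproj l v) (vcnj (eigproj l v))" .
  qed
  finally show ?thesis .
qed

lemma one_minus_nontriv_eigval:
  assumes "l \<in> nontriv_eigvals"
  shows "1 - l = of_real (2 * Re (sqrtS1 (- l))) * sqrtS1 (- l)"
proof -
  define s where "s = sqrtS1 (- l)"
  have "of_real (2 * Re s) * s = (s + cnj s) * s"
    by (simp add: complex_add_cnj)
  also have "\<dots> = s ^ 2 + cnj s * s"
    by (simp add: algebra_simps power2_eq_square)
  finally show ?thesis
    using sqrtS1_neg_eigval[OF assms] by (simp add: s_def)
qed

lemma Lform_symmetrized_diagonal:
  "Lform A v (vcnj v) + Lform A (vcnj v) v =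
   (\<Sum>l\<in>nontriv_eigvals. of_real (2 * Re (sqrtS1 (- l))) * hlam A l (eigproj l v) (eigproj l v))"
proof -
  define t where "t l = Lform A (eigproj l v) (vcnj (eigproj l v))" for l
  have "Lform A v (vcnj v) + Lform A (vcnj v) v = (\<Sum>l\<in>eigvals. (1 - l) * t l)"
    unfolding Lform_vcnj_diagonal[of v] Lform_vcnj_swapped_diagonal[of v] t_def sum.distrib[symmetric]
    by (simp add: algebra_simps)
  also have "\<dots> = (\<Sum>l\<in>nontriv_eigvals. (1 - l) * t l)"
    by (rule sum.mono_neutral_right[OF finite_eigvals]) auto
  also have "\<dots> = (\<Sum>l\<in>nontriv_eigvals.
      of_real (2 * Re (sqrtS1 (- l))) * hlam A l (eigproj l v) (eigproj l v))"
    by (intro sum.cong refl) (simp add: one_minus_nontriv_eigval t_def hlam_def)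
  finally show ?thesis .
qed

lemma pos_def_on_diagonal:
  fixes w :: "complex \<Rightarrow> real"
  assumes V: "csubspace V" "\<forall>v\<in>V. M *v v \<in> V" "\<forall>v\<in>V. M *v v = v \<longrightarrow> v = 0"
    and w_pos: "\<And>l. l \<in> nontriv_eigvals \<Longrightarrow> w l > 0"
    and F: "\<And>v. F v v = (\<Sum>l\<in>nontriv_eigvals. of_real (w l) * hlam A l (eigproj l v) (eigproj l v))"
  shows "pos_def_on V F \<longleftrightarrow>
    (\<forall>l\<in>nontriv_eigvals. \<forall>x\<in>V \<inter> eigsp M l. x \<noteq> 0 \<longrightarrow> Re (hlam A l x x) > 0)"
proof
  assume F_pos: "pos_def_on V F"
  show "\<forall>l\<in>nontriv_eigvals. \<forall>x\<in>V \<inter> eigsp M l. x \<noteq> 0 \<longrightarrow> Re (hlam A l x x) > 0"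
  proof (intro ballI impI)
    fix l x assume l: "l \<in> nontriv_eigvals" and x: "x \<in> V \<inter> eigsp M l" "x \<noteq> 0"
    have "eigproj m x = (if m = l then x else 0)" if "m \<in> nontriv_eigvals" for m
      using eigproj_eigvec[of m l x] eigval_root_unity that l x by auto
    then have "F x x = (\<Sum>m\<in>nontriv_eigvals. if m = l then of_real (w l) * hlam A l x x else 0)"
      unfolding F by (intro sum.cong refl) simp
    also have "\<dots> = of_real (w l) * hlam A l x x"
      using l finite_eigvals by (simp add: sum.delta')
    finally have "w l * Re (hlam A l x x) > 0"
      using F_pos x unfolding pos_def_on_def by auto
    then show "Re (hlam A l x x) > 0"
      using w_pos[OF l] by (simp add: zero_less_mult_iff)
  qed
next
  assume h_pos: "\<forall>l\<in>nontriv_eigvals. \<forall>x\<in>V \<inter> eigsp M l. x \<noteq> 0 \<longrightarrow> Re (hlam A l x x) > 0"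
  show "pos_def_on V F"
    unfolding pos_def_on_def
  proof (intro ballI impI)
    fix v assume v: "v \<in> V" "v \<noteq> 0"
    define c where "c l = of_real (w l) * hlam A l (eigproj l v) (eigproj l v)" for l
    have c: "c l \<in> \<real> \<and> Re (c l) \<ge> 0 \<and> (eigproj l v \<noteq> 0 \<longrightarrow> Re (c l) > 0)"
      if l: "l \<in> nontriv_eigvals" for l
    proof -
      have p: "eigproj l v \<in> V \<inter> eigsp M l"
        using l V v eigproj_invariant_subspace eigproj_in_eigsp by auto
      show ?thesis
      proof (cases "eigproj l v = 0")
        case False
        then have "Re (hlam A l (eigproj l v) (eigproj l v)) > 0"
          using h_pos l p by blast
        then show ?thesis
          using hlam_diag_real[OF l] p w_pos[OF l] by (simp add: c_def Reals_mult)
      qed (simp add: c_def)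
    qed
    obtain l0 where l0: "l0 \<in> nontriv_eigvals" "eigproj l0 v \<noteq> 0"
      using exists_nontrivial_eigproj[OF V v] by blast
    have "Im (F v v) = 0"
      using c by (simp add: F Im_sum complex_is_Real_iff flip: c_def)
    moreover have "Re (F v v) > 0"
      unfolding F Re_sum c_def[symmetric]
      using c l0 finite_eigvals by (intro sum_pos2[of _ l0]) auto
    ultimately show "Im (F v v) = 0 \<and> Re (F v v) > 0" by blast
  qed
qed

lemma hform_pos_def_iff_Lform_symmetrized_pos_def:
  assumes "csubspace V" "\<forall>v\<in>V. M *v v \<in> V" "\<forall>v\<in>V. M *v v = v \<longrightarrow> v = 0"
  shows "pos_def_on V (hform A M) \<longleftrightarrow>
    pos_def_on V (\<lambda>a b. Lform A a (vcnj b) + Lform A (vcnj b) a)"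
  using pos_def_on_diagonal[OF assms, of "\<lambda>_. 1" "hform A M"]
    pos_def_on_diagonal[OF assms, of "\<lambda>l. 2 * Re (sqrtS1 (- l))"]
  by (simp add: hform_diagonal Lform_symmetrized_diagonal sqrtS1_neg_eigval(2))

end

theorem lemma2p2:
  fixes A M :: "complex^'n^'n"
  assumes A_int: "int_mat A"
    and A_unimod: "det A = 1 \<or> det A = -1"
    and M_int: "int_mat M"
    and M_aut: "\<exists>N. int_mat N \<and> M ** N = mat 1 \<and> N ** M = mat 1"
    and M_rel: "\<forall>a b. int_vec a \<longrightarrow> int_vec b \<longrightarrow> Lform A (M *v a) b = - Lform A b a"
    and M_fin: "\<exists>k>0. ((\<lambda>v. M *v v) ^^ k) = id"
  shows "(\<forall>lam. is_eigval M lam \<and> lam \<noteq> 1 \<longrightarrow>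
            (\<forall>a\<in>eigsp M lam. \<forall>b\<in>eigsp M lam. hlam A lam b a = cnj (hlam A lam a b))
          \<and> (\<forall>a\<in>eigsp M lam. sqrtS1 (- lam) * Lform A a (vcnj a) \<in> \<real>))
       \<and> (\<forall>V. csubspace V \<and> (\<forall>v\<in>V. M *v v \<in> V) \<and> (\<forall>v\<in>V. M *v v = v \<longrightarrow> v = 0) \<longrightarrow>
            (pos_def_on V (hform A M) \<longleftrightarrow>
             pos_def_on V (\<lambda>a b. Lform A a (vcnj b) + Lform A (vcnj b) a)))"
proof -
  obtain k where "k > 0" "((*v) M ^^ k) = id"
    using M_fin by blast
  then interpret skew_finite_order M k A
    using int_mat_real[OF A_int] int_mat_real[OF M_int] Lform_skew_extends[OF M_rel]
    by unfold_locales auto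
  show ?thesis
    using hlam_hermitian hlam_diag_real hform_pos_def_iff_Lform_symmetrized_pos_def
    by (auto simp: hlam_def)
qed

end
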